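(* Let $m,n$ be positive integers with $n \geq m$, and let $G = K_m \otimes K_n$. Then: (1) If $m=n=2$, then $G$ is disconnected. (2) If $m \geq 3$ and $n \leq 2m-2$, then $\dim(G) = \left\lceil \frac{2}{3}(m+n-2) \right\rceil$. (3) If $m \geq 2$ and $n \geq 2m-1$, then $\dim(G) = n-1$.
   Context: $K_r$ denotes the complete graph (clique) on $r$ vertices. The tensor product $G \otimes H$ of simple graphs $G,H$ has vertex set $V(G)\times V(H)$, with $(u,v)$ adjacent to $(x,y)$ if and only if $ux \in E(G)$ and $vy \in E(H)$. For a connected graph $G$ with distance function $d$, and an ordered set $W=\{w_1,\dots,w_k\}\subseteq V(G)$, the metric representation of a vertex $v$ is $r(v\mid W)=(d(v,w_1),\dots,d(v,w_k))$. $W$ is a resolving set if distinct vertices have distinct representations; the metric dimension $\dim(G)$ is the minimum cardinality of a resolving set. *)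

theory Defs
  imports Complex_Main
begin

text \<open>A simple graph is given by a vertex set V and a symmetric irreflexive
adjacency relation E (only its restriction to V matters).\<close>

fun walk_of_len :: "'a set \<Rightarrow> ('a \<Rightarrow> 'a \<Rightarrow> bool) \<Rightarrow> nat \<Rightarrow> 'a \<Rightarrow> 'a \<Rightarrow> bool" where
  "walk_of_len V E 0 u v = (u \<in> V \<and> u = v)"
| "walk_of_len V E (Suc k) u v = (u \<in> V \<and> (\<exists>w\<in>V. E u w \<and> walk_of_len V E k w v))"

definition graph_connected :: "'a set \<Rightarrow> ('a \<Rightarrow> 'a \<Rightarrow> bool) \<Rightarrow> bool" where
  "graph_connected V E \<longleftrightarrow> (\<forall>u\<in>V. \<forall>v\<in>V. \<exists>k. walk_of_len V E k u v)"

definition gdist :: "'a set \<Rightarrow> ('a \<Rightarrow> 'a \<Rightarrow> bool) \<Rightarrow> 'a \<Rightarrow> 'a \<Rightarrow> nat" where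
  "gdist V E u v = (LEAST k. walk_of_len V E k u v)"

text \<open>W resolves the graph: distinct vertices have distinct distance vectors to W.
(Comparing the ordered representation vectors is the same as comparing all distances to W.)\<close>
definition resolving_set :: "'a set \<Rightarrow> ('a \<Rightarrow> 'a \<Rightarrow> bool) \<Rightarrow> 'a set \<Rightarrow> bool" where
  "resolving_set V E W \<longleftrightarrow> W \<subseteq> V \<and>
     (\<forall>u\<in>V. \<forall>v\<in>V. (\<forall>w\<in>W. gdist V E u w = gdist V E v w) \<longrightarrow> u = v)"

definition metric_dim :: "'a set \<Rightarrow> ('a \<Rightarrow> 'a \<Rightarrow> bool) \<Rightarrow> nat" where
  "metric_dim V E = (LEAST k. \<exists>W. finite W \<and> card W = k \<and> resolving_set V E W)"

definition K_verts :: "nat \<Rightarrow> nat set" where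
  "K_verts r = {0..<r}"

definition K_adj :: "nat \<Rightarrow> nat \<Rightarrow> bool" where
  "K_adj x y \<longleftrightarrow> x \<noteq> y"

definition tensor_verts :: "'a set \<Rightarrow> 'b set \<Rightarrow> ('a \<times> 'b) set" where
  "tensor_verts VG VH = VG \<times> VH"

definition tensor_adj :: "('a \<Rightarrow> 'a \<Rightarrow> bool) \<Rightarrow> ('b \<Rightarrow> 'b \<Rightarrow> bool) \<Rightarrow> 'a \<times> 'b \<Rightarrow> 'a \<times> 'b \<Rightarrow> bool" where
  "tensor_adj EG EH p q \<longleftrightarrow> EG (fst p) (fst q) \<and> EH (snd p) (snd q)"

end

theory Submission
  imports Defs
begin

text \<open>A vertex of \<open>K\<^sub>m \<otimes> K\<^sub>n\<close> is a cell \<open>(a, b)\<close> of the \<open>m \<times> n\<close> grid, and two cells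
are adjacent iff they share neither row nor column. For \<open>n \<ge> 3\<close> distinct cells are at distance 1
if they share no line and at distance 2 otherwise, except that for \<open>m = 2\<close> two cells in one column
are at distance 3. So, for \<open>m \<ge> 3\<close>, a set \<open>W\<close> of cells is resolving iff at most one row and at
most one column miss \<open>W\<close>, at most one cell of \<open>W\<close> is isolated (alone in its row and its column),
and an isolated cell never coexists with both an empty row and an empty column. Giving each cell of
\<open>W\<close> the weight \<open>1/r + 1/c\<close>, where \<open>r\<close> and \<open>c\<close> count the cells of \<open>W\<close> in its row and column,
yields \<open>2(m + n) \<le> 3|W| + 4\<close>; sets made of dominoes (two cells sharing a line) attain this.
When \<open>n \<ge> 2m - 1\<close> the columns alone force \<open>|W| \<ge> n - 1\<close>, since two empty columns cannot be
told apart, and dominoes in rows \<open>0, \<dots>, m - 2\<close> completed by row \<open>m - 1\<close> give \<open>n - 1\<close>.\<close>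

abbreviation KK_verts :: "nat \<Rightarrow> nat \<Rightarrow> (nat \<times> nat) set" where
  "KK_verts m n \<equiv> {0..<m} \<times> {0..<n}"

abbreviation KK_adj :: "nat \<times> nat \<Rightarrow> nat \<times> nat \<Rightarrow> bool" where
  "KK_adj u w \<equiv> fst u \<noteq> fst w \<and> snd u \<noteq> snd w"

lemma tensor_K_K_eq: "tensor_verts (K_verts m) (K_verts n) = KK_verts m n"
    "tensor_adj K_adj K_adj = KK_adj"
  by (auto simp: tensor_verts_def K_verts_def tensor_adj_def K_adj_def fun_eq_iff)

section \<open>Distances in \<open>K\<^sub>m \<otimes> K\<^sub>n\<close>\<close>

lemma walk_of_len_2_iff:
  "walk_of_len V E 2 u v \<longleftrightarrow> u \<in> V \<and> v \<in> V \<and> (\<exists>x\<in>V. E u x \<and> E x v)"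
  by (auto simp: numeral_2_eq_2)

lemma walk_of_len_SucI:
  "u \<in> V \<Longrightarrow> x \<in> V \<Longrightarrow> E u x \<Longrightarrow> walk_of_len V E k x v \<Longrightarrow> walk_of_len V E (Suc k) u v"
  by auto

lemma gdist_eqI:
  assumes "walk_of_len V E k u v" "\<And>j. j < k \<Longrightarrow> \<not> walk_of_len V E j u v"
  shows "gdist V E u v = k"
  unfolding gdist_def by (rule Least_equality) (use assms not_le in blast)+

lemma gdist_self: "u \<in> V \<Longrightarrow> gdist V E u u = 0"
  by (rule gdist_eqI) auto

lemma gdist_edge: "u \<in> V \<Longrightarrow> v \<in> V \<Longrightarrow> E u v \<Longrightarrow> u \<noteq> v \<Longrightarrow> gdist V E u v = 1"
  by (rule gdist_eqI) (auto simp: less_Suc_eq)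

lemma gdist_common_neighbour:
  assumes "u \<in> V" "v \<in> V" "u \<noteq> v" "\<not> E u v" "x \<in> V" "E u x" "E x v"
  shows "gdist V E u v = 2"
  by (rule gdist_eqI) (use assms in \<open>auto simp: walk_of_len_2_iff less_2_cases_iff\<close>)

lemma ex_less_neq: "2 \<le> (m::nat) \<Longrightarrow> \<exists>x<m. x \<noteq> a"
  by (rule exI[of _ "if a = 0 then 1 else 0"]) auto

lemma ex_less_neq2: "3 \<le> (m::nat) \<Longrightarrow> \<exists>x<m. x \<noteq> a \<and> x \<noteq> c"
  by (rule exI[of _ "if 0 \<notin> {a, c} then 0 else if 1 \<notin> {a, c} then 1 else 2"]) auto

text \<open>For \<open>m, n \<ge> 3\<close> this is the distance of \<open>K\<^sub>m \<otimes> K\<^sub>n\<close>; for \<open>m = 2\<close> it is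
the distance truncated at 2.\<close>

definition KK_dist :: "nat \<times> nat \<Rightarrow> nat \<times> nat \<Rightarrow> nat" where
  "KK_dist u w = (if u = w then 0 else if KK_adj u w then 1 else 2)"

lemma gdist_KK:
  assumes m: "2 \<le> m" and n: "3 \<le> n" and u: "u \<in> KK_verts m n" and w: "w \<in> KK_verts m n"
  shows "gdist (KK_verts m n) KK_adj u w =
    (if m = 2 \<and> fst u \<noteq> fst w \<and> snd u = snd w then 3 else KK_dist u w)"
proof -
  obtain a b c d where ab: "u = (a, b)" and cd: "w = (c, d)" by fastforce
  have abcd: "a < m" "b < n" "c < m" "d < n" using u w ab cd by auto
  consider "u = w" | "KK_adj u w" | "u \<noteq> w" "a = c" | "m = 2" "a \<noteq> c" "b = d"
    | "3 \<le> m" "a \<noteq> c" "b = d"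
    using ab cd m by fastforce
  then show ?thesis
  proof cases
    case 1
    then show ?thesis using u by (simp add: gdist_self KK_dist_def)
  next
    case 2
    then show ?thesis using u w by (auto simp: gdist_edge KK_dist_def)
  next
    case 3
    obtain x where "x < m" "x \<noteq> a" using ex_less_neq[OF m] by blast
    moreover obtain y where "y < n" "y \<noteq> b" "y \<noteq> d" using ex_less_neq2[OF n] by blast
    ultimately have "gdist (KK_verts m n) KK_adj u w = 2"
      using 3 u w ab cd by (intro gdist_common_neighbour[where x = "(x, y)"]) auto
    then show ?thesis using 3 ab cd by (simp add: KK_dist_def)
  next
    case 4
    txt \<open>A common neighbour of \<open>u\<close> and \<open>w\<close> would need a third row.\<close>
    obtain y where y: "y < n" "y \<noteq> b" using ex_less_neq2[OF n] by blast
    obtain z where z: "z < n" "z \<noteq> b" "z \<noteq> y" using ex_less_neq2[OF n] by blast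
    have "walk_of_len (KK_verts m n) KK_adj 2 (c, y) w"
      unfolding walk_of_len_2_iff using 4 abcd cd y z by (intro conjI bexI[of _ "(a, z)"]) auto
    then have "walk_of_len (KK_verts m n) KK_adj (Suc 2) u w"
      by (rule walk_of_len_SucI[rotated 3]) (use 4 abcd ab y in auto)
    moreover have "\<not> walk_of_len (KK_verts m n) KK_adj j u w" if "j < Suc 2" for j
      using that[unfolded less_Suc_eq] 4 ab cd abcd by (auto simp: less_2_cases_iff walk_of_len_2_iff)
    ultimately have "gdist (KK_verts m n) KK_adj u w = Suc 2" by (rule gdist_eqI)
    then show ?thesis using 4 ab cd by simp
  next
    case 5
    obtain x where "x < m" "x \<noteq> a" "x \<noteq> c" using ex_less_neq2[OF 5(1)] by blast
    moreover obtain y where "y < n" "y \<noteq> b" using ex_less_neq2[OF n] by blast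
    ultimately have "gdist (KK_verts m n) KK_adj u w = 2"
      using 5 u w ab cd by (intro gdist_common_neighbour[where x = "(x, y)"]) auto
    then show ?thesis using 5 ab cd by (simp add: KK_dist_def)
  qed
qed

lemma walk_of_len_KK_2_2_parity:
  "walk_of_len (KK_verts 2 2) KK_adj k u v \<Longrightarrow> even (fst u + snd u) = even (fst v + snd v)"
proof (induction k arbitrary: u)
  case (Suc k)
  then obtain w where "u \<in> KK_verts 2 2" "w \<in> KK_verts 2 2" "KK_adj u w"
    "walk_of_len (KK_verts 2 2) KK_adj k w v" by auto
  moreover from this(1-3) have "even (fst u + snd u) = even (fst w + snd w)"
    by (auto simp: less_2_cases_iff)
  ultimately show ?case using Suc.IH by blast
qed simp

lemma KK_2_2_disconnected: "\<not> graph_connected (KK_verts 2 2) KK_adj"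
proof
  assume "graph_connected (KK_verts 2 2) KK_adj"
  then obtain k where "walk_of_len (KK_verts 2 2) KK_adj k (0, 0) (0, 1)"
    unfolding graph_connected_def by force
  then show False using walk_of_len_KK_2_2_parity by fastforce
qed

section \<open>Resolving sets as patterns of rows and columns\<close>

definition empty_rows :: "nat \<Rightarrow> (nat \<times> nat) set \<Rightarrow> nat set" where
  "empty_rows m W = {..<m} - fst ` W"

definition empty_cols :: "nat \<Rightarrow> (nat \<times> nat) set \<Rightarrow> nat set" where
  "empty_cols n W = {..<n} - snd ` W"

definition isolated :: "('a \<times> 'b) set \<Rightarrow> ('a \<times> 'b) set" where
  "isolated W = {w \<in> W. \<forall>x\<in>W. fst x = fst w \<or> snd x = snd w \<longrightarrow> x = w}"

definition grid_resolving :: "nat \<Rightarrow> nat \<Rightarrow> (nat \<times> nat) set \<Rightarrow> bool" where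
  "grid_resolving m n W \<longleftrightarrow> W \<subseteq> KK_verts m n
     \<and> card (empty_rows m W) \<le> 1 \<and> card (empty_cols n W) \<le> 1 \<and> card (isolated W) \<le> 1
     \<and> (isolated W = {} \<or> empty_rows m W = {} \<or> empty_cols n W = {})"

definition KK_resolving :: "nat \<Rightarrow> nat \<Rightarrow> (nat \<times> nat) set \<Rightarrow> bool" where
  "KK_resolving m n W \<longleftrightarrow> W \<subseteq> KK_verts m n \<and>
     (\<forall>u\<in>KK_verts m n. \<forall>v\<in>KK_verts m n. (\<forall>w\<in>W. KK_dist u w = KK_dist v w) \<longrightarrow> u = v)"

lemma card_le_1_eq: "card S \<le> 1 \<Longrightarrow> finite S \<Longrightarrow> x \<in> S \<Longrightarrow> y \<in> S \<Longrightarrow> x = y"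
  by (metis One_nat_def card_le_Suc0_iff_eq)

lemma card_le_1_iff_eq: "finite S \<Longrightarrow> card S \<le> 1 \<longleftrightarrow> (\<forall>x\<in>S. \<forall>y\<in>S. x = y)"
  by (simp add: card_le_Suc0_iff_eq)

lemma finite_isolated: "finite W \<Longrightarrow> finite (isolated W)"
  by (simp add: isolated_def)

lemma isolated_memI:
  "w \<in> W \<Longrightarrow> (\<And>x. x \<in> W \<Longrightarrow> fst x = fst w \<or> snd x = snd w \<Longrightarrow> x = w) \<Longrightarrow> w \<in> isolated W"
  by (auto simp: isolated_def)

lemma isolated_memD:
  "w \<in> isolated W \<Longrightarrow> x \<in> W \<Longrightarrow> x \<noteq> w \<Longrightarrow> fst x \<noteq> fst w \<and> snd x \<noteq> snd w"
  by (auto simp: isolated_def)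

lemma KK_dist_same_col_eq: "fst w \<notin> {a, c} \<Longrightarrow> KK_dist (a, b) w = KK_dist (c, b) w"
  by (cases w) (auto simp: KK_dist_def)

lemma KK_dist_same_row_eq: "snd w \<notin> {b, d} \<Longrightarrow> KK_dist (a, b) w = KK_dist (a, d) w"
  by (cases w) (auto simp: KK_dist_def)

lemma KK_dist_eq_0_iff [simp]: "KK_dist u w = 0 \<longleftrightarrow> u = w"
  by (simp add: KK_dist_def)

lemma KK_dist_row_neq: "fst w = a \<Longrightarrow> a \<noteq> c \<Longrightarrow> w \<noteq> (a, b) \<Longrightarrow> KK_dist (a, b) w \<noteq> KK_dist (c, b) w"
  by (cases w) (auto simp: KK_dist_def)

lemma KK_dist_col_neq: "snd w = b \<Longrightarrow> b \<noteq> d \<Longrightarrow> w \<noteq> (a, b) \<Longrightarrow> KK_dist (a, b) w \<noteq> KK_dist (a, d) w"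
  by (cases w) (auto simp: KK_dist_def)

lemma KK_dist_cross_eq_iff:
  assumes "a \<noteq> c" "b \<noteq> d"
  shows "KK_dist (a, b) w = KK_dist (c, d) w \<longleftrightarrow>
    w = (a, d) \<or> w = (c, b) \<or> (fst w \<notin> {a, c} \<and> snd w \<notin> {b, d})"
  using assms by (cases w) (auto simp: KK_dist_def)

lemma KK_resolving_meets_cross:
  assumes "KK_resolving m n W" "a \<noteq> c" "b \<noteq> d" "(a, b) \<in> KK_verts m n" "(c, d) \<in> KK_verts m n"
  shows "\<exists>w\<in>W. w \<noteq> (a, d) \<and> w \<noteq> (c, b) \<and> (fst w \<in> {a, c} \<or> snd w \<in> {b, d})"
proof (rule ccontr)
  assume "\<not> ?thesis"
  then have "\<forall>w\<in>W. KK_dist (a, b) w = KK_dist (c, d) w"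
    using KK_dist_cross_eq_iff[OF assms(2,3)] by blast
  then have "(a, b) = (c, d)" using assms(1,4,5) unfolding KK_resolving_def by blast
  then show False using \<open>a \<noteq> c\<close> by simp
qed

lemma KK_resolving_imp_grid_resolving:
  assumes "0 < m" "0 < n" and res: "KK_resolving m n W"
  shows "grid_resolving m n W"
proof -
  have W: "W \<subseteq> KK_verts m n" and fin: "finite W"
    using res finite_subset unfolding KK_resolving_def by blast+
  have inj: "u = v" if "u \<in> KK_verts m n" "v \<in> KK_verts m n"
    "\<And>w. w \<in> W \<Longrightarrow> KK_dist u w = KK_dist v w" for u v
    using res that unfolding KK_resolving_def by blast
  have "a = c" if "a \<in> empty_rows m W" "c \<in> empty_rows m W" for a c
  proof -
    have "(a, 0::nat) = (c, 0)"
      using that \<open>0 < n\<close> by (intro inj KK_dist_same_col_eq) (force simp: empty_rows_def)+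
    then show ?thesis by simp
  qed
  then have "card (empty_rows m W) \<le> 1"
    by (subst card_le_1_iff_eq) (auto simp: empty_rows_def)
  moreover have "b = d" if "b \<in> empty_cols n W" "d \<in> empty_cols n W" for b d
  proof -
    have "(0::nat, b) = (0, d)"
      using that \<open>0 < m\<close> by (intro inj KK_dist_same_row_eq) (force simp: empty_cols_def)+
    then show ?thesis by simp
  qed
  then have "card (empty_cols n W) \<le> 1"
    by (subst card_le_1_iff_eq) (auto simp: empty_cols_def)
  moreover have "w = w'" if iso: "w \<in> isolated W" "w' \<in> isolated W" for w w'
  proof (rule ccontr)
    assume "w \<noteq> w'"
    obtain a d c b where ad: "w = (a, d)" and cb: "w' = (c, b)" by fastforce
    have "w \<in> W" "w' \<in> W" using iso by (auto simp: isolated_def)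
    moreover have "a \<noteq> c" "b \<noteq> d"
      using isolated_memD[OF iso(1) \<open>w' \<in> W\<close>] \<open>w \<noteq> w'\<close> ad cb by auto
    ultimately obtain x where "x \<in> W" "x \<noteq> w" "x \<noteq> w'" "fst x \<in> {a, c} \<or> snd x \<in> {b, d}"
      using KK_resolving_meets_cross[OF res, of a c b d] W ad cb by fastforce
    then show False
      using isolated_memD[OF iso(1), of x] isolated_memD[OF iso(2), of x] ad cb by auto
  qed
  then have "card (isolated W) \<le> 1"
    using fin by (subst card_le_1_iff_eq) (auto simp: finite_isolated)
  moreover have "isolated W = {} \<or> empty_rows m W = {} \<or> empty_cols n W = {}"
  proof (rule ccontr)
    assume "\<not> ?thesis"
    then obtain w c b where iso: "w \<in> isolated W" and c: "c \<in> empty_rows m W"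
      and b: "b \<in> empty_cols n W" by blast
    obtain a d where ad: "w = (a, d)" by fastforce
    have "w \<in> W" using iso by (auto simp: isolated_def)
    then have "a \<noteq> c" "b \<noteq> d" "(a, b) \<in> KK_verts m n" "(c, d) \<in> KK_verts m n"
      using W c b ad by (auto simp: empty_rows_def empty_cols_def image_iff)
    then obtain x where "x \<in> W" "x \<noteq> w" "fst x \<in> {a, c} \<or> snd x \<in> {b, d}"
      and "x \<noteq> (c, b)"
      using KK_resolving_meets_cross[OF res, of a c b d] ad by blast
    then show False
      using isolated_memD[OF iso, of x] c b ad by (auto simp: empty_rows_def empty_cols_def)
  qed
  ultimately show ?thesis
    unfolding grid_resolving_def using W by blast
qed

lemma grid_resolving_meets_cross:
  assumes "grid_resolving m n W" "a \<noteq> c" "b \<noteq> d" "(a, b) \<in> KK_verts m n" "(c, d) \<in> KK_verts m n"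
  shows "\<exists>w\<in>W. w \<noteq> (a, d) \<and> w \<noteq> (c, b) \<and> (fst w \<in> {a, c} \<or> snd w \<in> {b, d})"
proof (rule ccontr)
  assume none: "\<not> ?thesis"
  have row_a: "x = (a, d)" if "x \<in> W" "fst x = a" for x using none that assms(2,3) by auto
  have row_c: "x = (c, b)" if "x \<in> W" "fst x = c" for x using none that assms(2,3) by auto
  have col_b: "x = (c, b)" if "x \<in> W" "snd x = b" for x using none that assms(2,3) by auto
  have col_d: "x = (a, d)" if "x \<in> W" "snd x = d" for x using none that assms(2,3) by auto
  have "finite W" using assms(1) finite_subset unfolding grid_resolving_def by blast
  have rows: "x = y" if "x \<in> empty_rows m W" "y \<in> empty_rows m W" for x y
    using assms(1) that by (intro card_le_1_eq[of "empty_rows m W"])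
      (auto simp: grid_resolving_def empty_rows_def)
  have isos: "x = y" if "x \<in> isolated W" "y \<in> isolated W" for x y
    using assms(1) that \<open>finite W\<close> by (intro card_le_1_eq[of "isolated W"])
      (auto simp: grid_resolving_def finite_isolated)
  have no_iso_row_col: "isolated W = {} \<or> empty_rows m W = {} \<or> empty_cols n W = {}"
    using assms(1) by (simp add: grid_resolving_def)
  have ad_iso: "(a, d) \<in> isolated W" if "(a, d) \<in> W"
    using that row_a col_d by (intro isolated_memI) (metis fst_conv snd_conv)+
  have cb_iso: "(c, b) \<in> isolated W" if "(c, b) \<in> W"
    using that row_c col_b by (intro isolated_memI) (metis fst_conv snd_conv)+
  have "a < m" "b < n" "c < m" "d < n" using assms(4,5) by auto
  then have ad_empty: "a \<in> empty_rows m W" "d \<in> empty_cols n W" if "(a, d) \<notin> W"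
    using that row_a col_d unfolding empty_rows_def empty_cols_def by (metis DiffI imageE lessThan_iff)+
  have cb_empty: "c \<in> empty_rows m W" "b \<in> empty_cols n W" if "(c, b) \<notin> W"
    using that row_c col_b \<open>c < m\<close> \<open>b < n\<close> unfolding empty_rows_def empty_cols_def
    by (metis DiffI imageE lessThan_iff)+
  consider "(a, d) \<in> W" "(c, b) \<in> W" | "(a, d) \<in> W" "(c, b) \<notin> W" | "(a, d) \<notin> W" "(c, b) \<in> W"
    | "(a, d) \<notin> W" "(c, b) \<notin> W" by blast
  then show False
  proof cases
    case 1
    then show False using isos[OF ad_iso cb_iso] assms(2) by simp
  next
    case 2
    then show False using no_iso_row_col ad_iso cb_empty by blast
  next
    case 3
    then show False using no_iso_row_col cb_iso ad_empty by blast
  next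
    case 4
    then show False using rows[OF ad_empty(1) cb_empty(1)] assms(2) by simp
  qed
qed

lemma grid_resolving_imp_KK_resolving:
  assumes "grid_resolving m n W"
  shows "KK_resolving m n W"
  unfolding KK_resolving_def
proof (intro conjI ballI impI)
  show W: "W \<subseteq> KK_verts m n" using assms unfolding grid_resolving_def by blast
  fix u v assume u: "u \<in> KK_verts m n" and v: "v \<in> KK_verts m n"
    and eq: "\<forall>w\<in>W. KK_dist u w = KK_dist v w"
  show "u = v"
  proof (rule ccontr)
    assume "u \<noteq> v"
    have "u \<notin> W" "v \<notin> W" using eq \<open>u \<noteq> v\<close> KK_dist_eq_0_iff by metis+
    obtain a b c d where ab: "u = (a, b)" and cd: "v = (c, d)" by fastforce
    consider "a = c" | "b = d" | "a \<noteq> c" "b \<noteq> d" by blast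
    then show False
    proof cases
      case 1
      then have "b \<noteq> d" using \<open>u \<noteq> v\<close> ab cd by simp
      moreover have "card (empty_cols n W) \<le> 1" "finite (empty_cols n W)"
        using assms by (simp_all add: grid_resolving_def empty_cols_def)
      ultimately obtain w where w: "w \<in> W" "snd w = b \<or> snd w = d"
        using card_le_1_eq[of "empty_cols n W" b d] u v ab cd by (force simp: empty_cols_def)
      then show False
        using KK_dist_col_neq[of w b d a] KK_dist_col_neq[of w d b a] eq 1 ab cd \<open>b \<noteq> d\<close>
          \<open>u \<notin> W\<close> \<open>v \<notin> W\<close>
        by metis
    next
      case 2
      then have "a \<noteq> c" using \<open>u \<noteq> v\<close> ab cd by simp
      moreover have "card (empty_rows m W) \<le> 1" "finite (empty_rows m W)"
        using assms by (simp_all add: grid_resolving_def empty_rows_def)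
      ultimately obtain w where w: "w \<in> W" "fst w = a \<or> fst w = c"
        using card_le_1_eq[of "empty_rows m W" a c] u v ab cd by (force simp: empty_rows_def)
      then show False
        using KK_dist_row_neq[of w a c b] KK_dist_row_neq[of w c a b] eq 2 ab cd \<open>a \<noteq> c\<close>
          \<open>u \<notin> W\<close> \<open>v \<notin> W\<close>
        by metis
    next
      case 3
      then obtain w where "w \<in> W" "w \<noteq> (a, d)" "w \<noteq> (c, b)" "fst w \<in> {a, c} \<or> snd w \<in> {b, d}"
        using grid_resolving_meets_cross[OF assms 3] u v ab cd by blast
      then show False using eq KK_dist_cross_eq_iff[OF 3, of w] ab cd by auto
    qed
  qed
qed

lemma resolving_set_imp_KK_resolving:
  assumes "3 \<le> m" "3 \<le> n" and res: "resolving_set (KK_verts m n) KK_adj W"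
  shows "KK_resolving m n W"
proof -
  have dist: "gdist (KK_verts m n) KK_adj u w = KK_dist u w"
    if "u \<in> KK_verts m n" "w \<in> KK_verts m n" for u w
    using gdist_KK[OF _ _ that] assms by simp
  have "\<forall>w\<in>W. gdist (KK_verts m n) KK_adj u w = gdist (KK_verts m n) KK_adj v w"
    if "W \<subseteq> KK_verts m n" "u \<in> KK_verts m n" "v \<in> KK_verts m n"
      "\<forall>w\<in>W. KK_dist u w = KK_dist v w" for u v
  proof
    fix w assume "w \<in> W"
    then have "w \<in> KK_verts m n" using that(1) by (rule subsetD[rotated])
    then show "gdist (KK_verts m n) KK_adj u w = gdist (KK_verts m n) KK_adj v w"
      using bspec[OF that(4) \<open>w \<in> W\<close>] by (simp only: dist that(2,3))
  qed
  then show ?thesis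
    using res unfolding resolving_set_def KK_resolving_def by blast
qed

lemma KK_resolving_imp_resolving_set:
  assumes "2 \<le> m" "3 \<le> n" and res: "KK_resolving m n W"
  shows "resolving_set (KK_verts m n) KK_adj W"
proof -
  have dist: "KK_dist u w = min 2 (gdist (KK_verts m n) KK_adj u w)"
    if "u \<in> KK_verts m n" "w \<in> KK_verts m n" for u w
    using gdist_KK[OF _ _ that] assms by (simp add: KK_dist_def)
  have "\<forall>w\<in>W. KK_dist u w = KK_dist v w"
    if "W \<subseteq> KK_verts m n" "u \<in> KK_verts m n" "v \<in> KK_verts m n"
      "\<forall>w\<in>W. gdist (KK_verts m n) KK_adj u w = gdist (KK_verts m n) KK_adj v w" for u v
  proof
    fix w assume "w \<in> W"
    then have "w \<in> KK_verts m n" using that(1) by (rule subsetD[rotated])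
    then show "KK_dist u w = KK_dist v w"
      using that(4) \<open>w \<in> W\<close> by (simp only: dist that(2,3))
  qed
  then show ?thesis
    using res unfolding resolving_set_def KK_resolving_def by blast
qed

lemma resolving_set_KK_empty_cols:
  assumes "2 \<le> m" "3 \<le> n" and res: "resolving_set (KK_verts m n) KK_adj W"
  shows "card (empty_cols n W) \<le> 1"
proof (subst card_le_1_iff_eq)
  show "finite (empty_cols n W)" by (simp add: empty_cols_def)
  have W: "W \<subseteq> KK_verts m n" using res unfolding resolving_set_def by (rule conjunct1)
  show "\<forall>b\<in>empty_cols n W. \<forall>d\<in>empty_cols n W. b = d"
  proof (intro ballI)
    fix b d assume "b \<in> empty_cols n W" "d \<in> empty_cols n W"
    then have bd: "(0, b) \<in> KK_verts m n" "(0, d) \<in> KK_verts m n"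
      and avoid: "\<And>w. w \<in> W \<Longrightarrow> snd w \<notin> {b, d}"
      using assms by (auto simp: empty_cols_def image_iff)
    have "gdist (KK_verts m n) KK_adj (0, b) w = gdist (KK_verts m n) KK_adj (0, d) w"
      if "w \<in> W" for w
    proof -
      have "w \<in> KK_verts m n" using W that by (rule subsetD)
      then show ?thesis
        using gdist_KK[OF assms(1,2) bd(1)] gdist_KK[OF assms(1,2) bd(2)]
          avoid[OF that] KK_dist_same_row_eq[of w b d 0] by simp
    qed
    then have "(0::nat, b) = (0, d)"
      using res bd unfolding resolving_set_def by blast
    then show "b = d" by simp
  qed
qed

section \<open>The counting bound\<close>

lemma card_image_plus_empty_rows:
  assumes "W \<subseteq> KK_verts m n"
  shows "m = card (fst ` W) + card (empty_rows m W)"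
proof -
  have sub: "fst ` W \<subseteq> {..<m}" using assms by force
  then have "card (fst ` W) \<le> m" using card_mono[OF _ sub] by simp
  then show ?thesis
    unfolding empty_rows_def using card_Diff_subset[OF finite_subset[OF sub] sub] by simp
qed

lemma card_image_plus_empty_cols:
  assumes "W \<subseteq> KK_verts m n"
  shows "n = card (snd ` W) + card (empty_cols n W)"
proof -
  have sub: "snd ` W \<subseteq> {..<n}" using assms by force
  then have "card (snd ` W) \<le> n" using card_mono[OF _ sub] by simp
  then show ?thesis
    unfolding empty_cols_def using card_Diff_subset[OF finite_subset[OF sub] sub] by simp
qed

lemma sum_inverse_card_fibres:
  assumes "finite W"
  shows "(\<Sum>w\<in>W. 1 / real (card {x\<in>W. f x = f w})) = real (card (f ` W))"
proof -
  have "(\<Sum>w\<in>W. 1 / real (card {x\<in>W. f x = f w}))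
      = (\<Sum>y\<in>f ` W. \<Sum>w\<in>{x\<in>W. f x = y}. 1 / real (card {x\<in>W. f x = y}))"
    by (subst sum.image_gen[OF assms]) (auto intro!: sum.cong)
  also have "\<dots> = (\<Sum>y\<in>f ` W. 1)"
    using assms by (intro sum.cong) (auto simp: card_gt_0_iff)
  finally show ?thesis by simp
qed

lemma inverse_card_fibre_le:
  assumes "finite W" "w \<in> W"
  shows "1 / real (card {x\<in>W. f x = f w}) \<le> (if \<exists>x\<in>W. x \<noteq> w \<and> f x = f w then 1/2 else 1)"
proof -
  have "{w} \<subseteq> {x\<in>W. f x = f w}" using assms by auto
  then have "1 \<le> card {x\<in>W. f x = f w}" using assms card_mono[of "{x\<in>W. f x = f w}" "{w}"] by simp
  moreover have "2 \<le> card {x\<in>W. f x = f w}" if "x \<in> W" "x \<noteq> w" "f x = f w" for x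
    using that assms card_mono[of "{x\<in>W. f x = f w}" "{w, x}"] by auto
  ultimately show ?thesis by (auto simp: field_simps)
qed

text \<open>A cell of \<open>W\<close> contributes \<open>1/r + 1/c \<le> 3/2\<close> to the left-hand side unless it is isolated.\<close>

lemma card_rows_cols_le:
  assumes "finite W"
  shows "2 * (card (fst ` W) + card (snd ` W)) \<le> 3 * card W + card (isolated W)"
proof -
  let ?inv = "\<lambda>f w. 1 / real (card {x\<in>W. f x = f w})"
  have "?inv fst w + ?inv snd w \<le> 3/2 + (if w \<in> isolated W then 1/2 else 0)" if "w \<in> W" for w
    using that inverse_card_fibre_le[OF assms that, of fst] inverse_card_fibre_le[OF assms that, of snd]
    by (auto simp: isolated_def split: if_splits)
  then have "(\<Sum>w\<in>W. ?inv fst w + ?inv snd w) \<le> (\<Sum>w\<in>W. 3/2 + (if w \<in> isolated W then 1/2 else 0))"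
    by (rule sum_mono)
  also have "\<dots> = 3/2 * card W + 1/2 * card (isolated W)"
    using assms by (simp add: sum.distrib sum.If_cases isolated_def Int_def)
  finally have "real (2 * (card (fst ` W) + card (snd ` W))) \<le> real (3 * card W + card (isolated W))"
    by (simp add: sum.distrib sum_inverse_card_fibres[OF assms])
  then show ?thesis by (simp only: of_nat_le_iff)
qed

lemma grid_resolving_card_bound:
  assumes "grid_resolving m n W"
  shows "2 * (m + n) \<le> 3 * card W + 4"
proof -
  have W: "W \<subseteq> KK_verts m n" using assms by (simp add: grid_resolving_def)
  then have "finite W" by (rule finite_subset) simp
  have "2 * (m + n) = 2 * (card (fst ` W) + card (snd ` W))
      + 2 * card (empty_rows m W) + 2 * card (empty_cols n W)"
    using card_image_plus_empty_rows[OF W] card_image_plus_empty_cols[OF W] by arith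
  also have "\<dots> \<le> 3 * card W + card (isolated W) + 2 * card (empty_rows m W) + 2 * card (empty_cols n W)"
    using card_rows_cols_le[OF \<open>finite W\<close>] by linarith
  also have "\<dots> \<le> 3 * card W + 4"
    using assms by (auto simp: grid_resolving_def)
  finally show ?thesis .
qed

section \<open>Constructions\<close>

lemma card_le_1_if_subset_singleton: "S \<subseteq> {a} \<Longrightarrow> card S \<le> 1"
  using card_mono[of "{a}" S] by simp

lemma grid_resolvingI:
  assumes "W \<subseteq> KK_verts m n" "empty_rows m W \<subseteq> {a}" "empty_cols n W \<subseteq> {b}"
    "card (isolated W) \<le> 1" "isolated W \<noteq> {} \<Longrightarrow> a \<notin> empty_rows m W \<or> b \<notin> empty_cols n W"
  shows "grid_resolving m n W"
  unfolding grid_resolving_def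
proof (intro conjI)
  show "card (empty_rows m W) \<le> 1" "card (empty_cols n W) \<le> 1"
    using assms(2,3) by (blast intro: card_le_1_if_subset_singleton)+
  show "isolated W = {} \<or> empty_rows m W = {} \<or> empty_cols n W = {}"
    using assms(2,3,5) by blast
qed (use assms in auto)

lemma card_isolated_le_1_if_same_row:
  assumes "finite W" "\<And>w. w \<in> isolated W \<Longrightarrow> fst w = r"
  shows "card (isolated W) \<le> 1"
proof (subst card_le_1_iff_eq)
  show "finite (isolated W)" using assms(1) by (rule finite_isolated)
  show "\<forall>w\<in>isolated W. \<forall>w'\<in>isolated W. w = w'"
  proof (intro ballI)
    fix w w' assume iso: "w \<in> isolated W" "w' \<in> isolated W"
    then have "w' \<in> W" by (simp add: isolated_def)
    show "w = w'"
    proof (rule ccontr)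
      assume "w \<noteq> w'"
      then show False using isolated_memD[OF iso(1) \<open>w' \<in> W\<close>] assms(2)[OF iso(1)] assms(2)[OF iso(2)]
        by simp
    qed
  qed
qed

text \<open>Horizontal dominoes in the rows \<open>0, \<dots>, m - 2\<close>; all further columns are met in row \<open>m - 1\<close>.\<close>

definition long_cell :: "nat \<Rightarrow> nat \<Rightarrow> nat \<times> nat" where
  "long_cell m j = (min (j div 2) (m - 1), j)"

lemma grid_resolving_long_cells:
  assumes m: "2 \<le> m" and n: "2 * m - 1 \<le> n"
  shows "grid_resolving m n (long_cell m ` {..<n - 1})"
proof -
  let ?W = "long_cell m ` {..<n - 1}"
  have rows: "a \<in> fst ` ?W" if "a < m - 1" for a
    using that n by (force simp: long_cell_def image_iff intro!: bexI[of _ "2 * a"])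
  have cols: "snd ` ?W = {..<n - 1}"
    by (force simp: long_cell_def image_iff)
  have iso_row: "fst w = m - 1" if iso: "w \<in> isolated ?W" for w
  proof (rule ccontr)
    assume "fst w \<noteq> m - 1"
    obtain j where j: "j < n - 1" "w = long_cell m j" using iso by (auto simp: isolated_def)
    define j' where "j' = (if even j then j + 1 else j - 1)"
    have "j' div 2 = j div 2" "j' \<noteq> j" unfolding j'_def by (auto elim: evenE oddE)
    moreover have "j' < n - 1"
      using \<open>fst w \<noteq> m - 1\<close> j n unfolding j'_def long_cell_def by (auto elim: evenE oddE)
    moreover have "long_cell m j' \<in> ?W" using \<open>j' < n - 1\<close> by blast
    ultimately show False
      using isolated_memD[OF iso, of "long_cell m j'"] j by (auto simp: long_cell_def)
  qed
  show ?thesis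
  proof (rule grid_resolvingI[where a = "m - 1" and b = "n - 1"])
    show "?W \<subseteq> KK_verts m n" using m n by (auto simp: long_cell_def)
    show "empty_rows m ?W \<subseteq> {m - 1}"
    proof
      fix a assume "a \<in> empty_rows m ?W"
      then have "a < m" "a \<notin> fst ` ?W" by (auto simp: empty_rows_def)
      then show "a \<in> {m - 1}" using rows[of a] by (cases "a < m - 1") auto
    qed
    show "empty_cols n ?W \<subseteq> {n - 1}" using cols by (auto simp: empty_cols_def)
    show "card (isolated ?W) \<le> 1"
      by (rule card_isolated_le_1_if_same_row[OF _ iso_row]) simp
    show "m - 1 \<notin> empty_rows m ?W \<or> n - 1 \<notin> empty_cols n ?W" if ne: "isolated ?W \<noteq> {}"
    proof -
      obtain w where w: "w \<in> isolated ?W" using ne by blast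
      then have "w \<in> ?W" by (simp add: isolated_def)
      then have "m - 1 \<in> fst ` ?W" using iso_row[OF w] by force
      then show ?thesis by (simp add: empty_rows_def)
    qed
  qed
qed

lemma card_long_cells: "card (long_cell m ` {..<k}) = k"
  by (subst card_image) (auto simp: inj_on_def long_cell_def)

text \<open>Cell \<open>i\<close> is half of domino \<open>i div 2\<close>. The first \<open>p\<close> dominoes are horizontal,
domino \<open>j\<close> covering \<open>(j, 2j)\<close> and \<open>(j, 2j + 1)\<close>; the others are vertical, domino \<open>p + j\<close>
covering \<open>(p + 2j, 2p + j)\<close> and \<open>(p + 2j + 1, 2p + j)\<close>. Cell \<open>2(p + q)\<close> is the corner
\<open>(p + 2q, 2p + q)\<close> next to the first \<open>q\<close> vertical dominoes.\<close>

definition domino_cell :: "nat \<Rightarrow> nat \<Rightarrow> nat \<times> nat" where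
  "domino_cell p i = (if i div 2 < p then (i div 2, 2 * (i div 2) + i mod 2)
     else (p + 2 * (i div 2 - p) + i mod 2, p + i div 2))"

lemma inj_domino_cell: "inj (domino_cell p)"
proof (rule inj_on_inverseI)
  fix i
  let ?g = "\<lambda>(a, b). if b < 2 * p then b else 2 * (b - p) + (a - p - 2 * (b - 2 * p))"
  show "?g (domino_cell p i) = i"
    by (cases "i div 2 < p") (auto simp: domino_cell_def)
qed

lemma fst_domino_cells: "fst ` domino_cell p ` {..<2 * (p + q)} = {..<p + 2 * q}"
proof (intro equalityI subsetI)
  fix a assume "a \<in> fst ` domino_cell p ` {..<2 * (p + q)}"
  then obtain i where "i < 2 * (p + q)" "a = fst (domino_cell p i)" by auto
  moreover from this have "i div 2 < p + q" "i mod 2 < 2" by presburger+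
  ultimately show "a \<in> {..<p + 2 * q}" by (auto simp: domino_cell_def)
next
  fix a assume "a \<in> {..<p + 2 * q}"
  then have "fst (domino_cell p i) = a \<and> i < 2 * (p + q)"
    if "i = (if a < p then 2 * a else p + a)" for i
    using that by (auto simp: domino_cell_def; presburger)
  then show "a \<in> fst ` domino_cell p ` {..<2 * (p + q)}" by (metis image_eqI lessThan_iff)
qed

lemma snd_domino_cells: "snd ` domino_cell p ` {..<2 * (p + q)} = {..<2 * p + q}"
proof (intro equalityI subsetI)
  fix b assume "b \<in> snd ` domino_cell p ` {..<2 * (p + q)}"
  then obtain i where "i < 2 * (p + q)" "b = snd (domino_cell p i)" by auto
  moreover from this have "i div 2 < p + q" "i mod 2 < 2" by presburger+
  ultimately show "b \<in> {..<2 * p + q}" by (auto simp: domino_cell_def)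
next
  fix b assume "b \<in> {..<2 * p + q}"
  then have "snd (domino_cell p i) = b \<and> i < 2 * (p + q)"
    if "i = (if b < 2 * p then b else 2 * (b - p))" for i
    using that by (auto simp: domino_cell_def)
  then show "b \<in> snd ` domino_cell p ` {..<2 * (p + q)}" by (metis image_eqI lessThan_iff)
qed

lemma domino_cell_partner:
  "\<exists>i'. i' div 2 = i div 2 \<and> domino_cell p i' \<noteq> domino_cell p i \<and>
    (fst (domino_cell p i') = fst (domino_cell p i) \<or> snd (domino_cell p i') = snd (domino_cell p i))"
proof -
  define i' where "i' = (if even i then i + 1 else i - 1)"
  have "i' div 2 = i div 2" "i' mod 2 \<noteq> i mod 2" unfolding i'_def by (auto elim: evenE oddE)
  then show ?thesis
    by (intro exI[of _ i']) (auto simp: domino_cell_def; presburger)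
qed

lemma grid_resolving_dominoes:
  assumes e: "e \<le> 1"
    and rows: "p + 2 * q + e \<le> m" "m \<le> p + 2 * q + e + 1"
    and cols: "2 * p + q + e \<le> n" "n \<le> 2 * p + q + e + 1"
    and corner_line: "e = 1 \<Longrightarrow> p + 2 * q + e = m \<or> 2 * p + q + e = n"
  shows "grid_resolving m n (domino_cell p ` {..<2 * (p + q) + e})"
proof -
  let ?D = "domino_cell p ` {..<2 * (p + q)}"
  let ?W = "domino_cell p ` {..<2 * (p + q) + e}"
  let ?C = "if e = 0 then {} else {(p + 2 * q, 2 * p + q)}"
  have "{..<2 * (p + q) + e} = {..<2 * (p + q)} \<union> (if e = 0 then {} else {2 * (p + q)})"
    using e by auto
  moreover have "domino_cell p (2 * (p + q)) = (p + 2 * q, 2 * p + q)"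
    by (simp add: domino_cell_def)
  ultimately have W: "?W = ?D \<union> ?C" by auto
  have fst_W: "fst ` ?W = {..<p + 2 * q + e}"
    using e unfolding W image_Un fst_domino_cells by auto
  have snd_W: "snd ` ?W = {..<2 * p + q + e}"
    using e unfolding W image_Un snd_domino_cells by auto
  have iso: "isolated ?W \<subseteq> ?C"
  proof
    fix w assume w: "w \<in> isolated ?W"
    show "w \<in> ?C"
    proof (rule ccontr)
      assume "w \<notin> ?C"
      moreover have "w \<in> ?W" using w by (simp add: isolated_def)
      ultimately have "w \<in> ?D" using W by blast
      then obtain i where i: "i < 2 * (p + q)" "w = domino_cell p i" by blast
      obtain i' where i': "i' div 2 = i div 2" "domino_cell p i' \<noteq> w"
        "fst (domino_cell p i') = fst w \<or> snd (domino_cell p i') = snd w"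
        using domino_cell_partner[of i p] unfolding i(2) by blast
      have "i' div 2 < p + q" using i(1) i'(1) by (simp add: div_less_iff_less_mult)
      then have "i' < 2 * (p + q) + e" by (simp add: div_less_iff_less_mult)
      then have "domino_cell p i' \<in> ?W" by blast
      then show False using isolated_memD[OF w] i'(2,3) by blast
    qed
  qed
  show ?thesis
  proof (rule grid_resolvingI[where a = "p + 2 * q + e" and b = "2 * p + q + e"])
    show "?W \<subseteq> KK_verts m n"
    proof
      fix x assume "x \<in> ?W"
      then have "fst x \<in> fst ` ?W" "snd x \<in> snd ` ?W" by blast+
      then show "x \<in> KK_verts m n" using rows cols unfolding fst_W snd_W by (cases x) auto
    qed
    show "empty_rows m ?W \<subseteq> {p + 2 * q + e}"
      using rows unfolding empty_rows_def fst_W by auto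
    show "empty_cols n ?W \<subseteq> {2 * p + q + e}"
      using cols unfolding empty_cols_def snd_W by auto
    have "isolated ?W \<subseteq> {(p + 2 * q, 2 * p + q)}"
      using iso by (simp split: if_splits)
    then show "card (isolated ?W) \<le> 1" by (rule card_le_1_if_subset_singleton)
    show "p + 2 * q + e \<notin> empty_rows m ?W \<or> 2 * p + q + e \<notin> empty_cols n ?W"
      if "isolated ?W \<noteq> {}"
    proof -
      have "e = 1" using that iso e by (auto split: if_splits)
      then show ?thesis
        using corner_line unfolding empty_rows_def empty_cols_def by auto
    qed
  qed
qed

lemma card_domino_cells: "card (domino_cell p ` {..<k}) = k"
  using card_image[OF inj_on_subset[OF inj_domino_cell subset_UNIV]] by simp

section \<open>The metric dimension\<close>

lemma metric_dim_eqI: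
  assumes "finite W" "resolving_set V E W" "card W = k"
    and "\<And>W'. finite W' \<Longrightarrow> resolving_set V E W' \<Longrightarrow> k \<le> card W'"
  shows "metric_dim V E = k"
  unfolding metric_dim_def by (rule Least_equality) (use assms in auto)

lemma metric_dim_KK_long:
  assumes m: "2 \<le> m" and n: "2 * m - 1 \<le> n"
  shows "metric_dim (KK_verts m n) KK_adj = n - 1"
proof (rule metric_dim_eqI)
  have "3 \<le> n" using m n by linarith
  let ?W = "long_cell m ` {..<n - 1}"
  show "finite ?W" by simp
  show "card ?W = n - 1" by (rule card_long_cells)
  show "resolving_set (KK_verts m n) KK_adj ?W"
    using KK_resolving_imp_resolving_set[OF m \<open>3 \<le> n\<close>]
      grid_resolving_imp_KK_resolving grid_resolving_long_cells[OF m n] by blast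
  fix W assume "finite W" and res: "resolving_set (KK_verts m n) KK_adj W"
  have "W \<subseteq> KK_verts m n" using res unfolding resolving_set_def by (rule conjunct1)
  then have "n = card (snd ` W) + card (empty_cols n W)" by (rule card_image_plus_empty_cols)
  moreover have "card (snd ` W) \<le> card W" using \<open>finite W\<close> by (rule card_image_le)
  ultimately show "n - 1 \<le> card W"
    using resolving_set_KK_empty_cols[OF m \<open>3 \<le> n\<close> res] by linarith
qed

text \<open>With \<open>m + n = 3t + r\<close>, \<open>0 \<le> r < 3\<close>, take \<open>q = m - t\<close> (or \<open>m - t - 1\<close> if \<open>r = 2\<close>),
\<open>p = n - t - 1\<close> and \<open>e = 1\<close> iff \<open>r = 0\<close>.\<close>

lemma domino_parameters:
  fixes m n :: nat
  assumes "3 \<le> m" "m \<le> n" "n \<le> 2 * m - 2"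
  obtains p q e where "e \<le> 1" "p + 2 * q + e \<le> m" "m \<le> p + 2 * q + e + 1"
    "2 * p + q + e \<le> n" "n \<le> 2 * p + q + e + 1"
    "e = 1 \<Longrightarrow> p + 2 * q + e = m \<or> 2 * p + q + e = n"
    "3 * (2 * (p + q) + e) + 2 \<le> 2 * (m + n)"
proof -
  define t where "t = (m + n) div 3"
  define r where "r = (m + n) mod 3"
  have s: "m + n = 3 * t + r" and "r < 3" unfolding t_def r_def by simp_all
  have "t + 1 \<le> n" using assms s \<open>r < 3\<close> by linarith
  then obtain p where p: "p + t + 1 = n" by (intro that[of "n - t - 1"]) linarith
  consider "r = 0" | "r = 1" | "r = 2" using \<open>r < 3\<close> by linarith
  then show ?thesis
  proof cases
    case 1
    have "t \<le> m" using assms s 1 by linarith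
    then obtain q where "q + t = m" by (intro that[of "m - t"]) linarith
    then show ?thesis using s 1 p by (intro that[of 1 p q]) presburger+
  next
    case 2
    have "t \<le> m" using assms s 2 by linarith
    then obtain q where "q + t = m" by (intro that[of "m - t"]) linarith
    then show ?thesis using s 2 p by (intro that[of 0 p q]) presburger+
  next
    case 3
    have "t + 1 \<le> m" using assms s 3 by linarith
    then obtain q where "q + t + 1 = m" by (intro that[of "m - t - 1"]) linarith
    then show ?thesis using s 3 p by (intro that[of 0 p q]) presburger+
  qed
qed

lemma metric_dim_KK_balanced:
  assumes m: "3 \<le> m" and "m \<le> n" "n \<le> 2 * m - 2"
  shows "3 * metric_dim (KK_verts m n) KK_adj + 2 \<le> 2 * (m + n)"
    and "2 * (m + n) \<le> 3 * metric_dim (KK_verts m n) KK_adj + 4"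
proof -
  have n: "3 \<le> n" using assms by linarith
  have lower: "2 * (m + n) \<le> 3 * card W + 4"
    if "resolving_set (KK_verts m n) KK_adj W" for W
    using resolving_set_imp_KK_resolving[OF m n that] KK_resolving_imp_grid_resolving
      grid_resolving_card_bound m n by simp
  obtain p q e where pqe: "e \<le> 1" "p + 2 * q + e \<le> m" "m \<le> p + 2 * q + e + 1"
    "2 * p + q + e \<le> n" "n \<le> 2 * p + q + e + 1"
    "e = 1 \<Longrightarrow> p + 2 * q + e = m \<or> 2 * p + q + e = n"
    and upper: "3 * (2 * (p + q) + e) + 2 \<le> 2 * (m + n)"
    using domino_parameters[OF assms] by blast
  let ?W = "domino_cell p ` {..<2 * (p + q) + e}"
  have res: "resolving_set (KK_verts m n) KK_adj ?W"
    using KK_resolving_imp_resolving_set grid_resolving_imp_KK_resolving grid_resolving_dominoes[OF pqe]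
      m n by simp
  have card: "card ?W = 2 * (p + q) + e" by (rule card_domino_cells)
  have "metric_dim (KK_verts m n) KK_adj = 2 * (p + q) + e"
  proof (rule metric_dim_eqI[OF _ res card])
    show "finite ?W" by simp
    show "2 * (p + q) + e \<le> card W" if "finite W" "resolving_set (KK_verts m n) KK_adj W" for W
      using lower[OF that(2)] upper by presburger
  qed
  then show "3 * metric_dim (KK_verts m n) KK_adj + 2 \<le> 2 * (m + n)"
    and "2 * (m + n) \<le> 3 * metric_dim (KK_verts m n) KK_adj + 4"
    using upper lower[OF res] card by simp_all
qed

lemma ceiling_two_thirds_eq:
  fixes d s :: nat
  assumes "3 * d + 2 \<le> 2 * s" "2 * s \<le> 3 * d + 4"
  shows "\<lceil>(2 / 3 :: real) * (real s - 2)\<rceil> = int d"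
proof (rule ceiling_unique)
  have "real (3 * d + 2) \<le> real (2 * s)" "real (2 * s) \<le> real (3 * d + 4)"
    using assms by (simp_all only: of_nat_le_iff)
  then show "real_of_int (int d) - 1 < 2 / 3 * (real s - 2)" "2 / 3 * (real s - 2) \<le> real_of_int (int d)"
    by simp_all
qed

theorem theorem1p1:
  fixes m n :: nat
  defines "V \<equiv> tensor_verts (K_verts m) (K_verts n)"
      and "E \<equiv> tensor_adj K_adj K_adj"
  assumes "m \<ge> 1" and "n \<ge> m"
  shows "(m = 2 \<and> n = 2 \<longrightarrow> \<not> graph_connected V E)
       \<and> (m \<ge> 3 \<and> n \<le> 2 * m - 2 \<longrightarrow>
            int (metric_dim V E) = \<lceil>(2 / 3 :: real) * (real m + real n - 2)\<rceil>)
       \<and> (m \<ge> 2 \<and> n \<ge> 2 * m - 1 \<longrightarrow> metric_dim V E = n - 1)"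
proof (intro conjI impI)
  have V: "V = KK_verts m n" and E: "E = KK_adj"
    unfolding V_def E_def by (simp_all add: tensor_K_K_eq)
  show "\<not> graph_connected V E" if "m = 2 \<and> n = 2"
    using that KK_2_2_disconnected by (simp add: V E)
  show "metric_dim V E = n - 1" if "m \<ge> 2 \<and> n \<ge> 2 * m - 1"
    using that metric_dim_KK_long by (simp add: V E)
  show "int (metric_dim V E) = \<lceil>(2 / 3 :: real) * (real m + real n - 2)\<rceil>"
    if "m \<ge> 3 \<and> n \<le> 2 * m - 2"
    using ceiling_two_thirds_eq[OF metric_dim_KK_balanced] that \<open>n \<ge> m\<close>
    by (simp add: V E)
qed

end
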